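(* Let $G_1,\dots,G_k$ ($k>1$) be connected graphs with at least one edge each, and let $G$ be any coalescence of $G_1,\dots,G_k$. Let $f:\mathbb{R}\to\mathbb{R}$ with $f(0)=0$. Then $f[-]$ preserves positivity on $\mathcal{P}_G(\mathbb{R})$ if and only if (1) $f[-]$ preserves positivity on each $\mathcal{P}_{G_i}(\mathbb{R})$, and (2) $f$ is continuous and super-additive on $[0,\infty)$. In particular, for any $\alpha\in\mathbb{R}$, $\psi_\alpha$ (resp. $\phi_\alpha$) preserves positivity on $\mathcal{P}_G(\mathbb{R})$ if and only if it does so on $\mathcal{P}_{G_i}(\mathbb{R})$ for all $1\le i\le k$ and $\alpha\ge1$; that is, \[ \mathcal{H}^\psi_G=[1,\infty)\cap\bigcap_{i=1}^k\mathcal{H}^\psi_{G_i},\qquad \mathcal{H}^\phi_G=[1,\infty)\cap\bigcap_{i=1}^k\mathcal{H}^\phi_{G_i}. \]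
   Context: Graphs are finite and simple. A coalescence of two graphs $H_1,H_2$ is the graph obtained from their disjoint union by identifying a vertex of $H_1$ with a vertex of $H_2$; a coalescence of $G_1,\dots,G_k$ is obtained iteratively by coalescing a coalescence of $G_1,\dots,G_{i-1}$ with $G_i$. Super-additive on $[0,\infty)$ means $f(x+y)\ge f(x)+f(y)$ for $x,y\ge0$. For a graph $H$ on $\{1,\dots,n\}$, $\mathcal{P}_H(\mathbb{R})$ is the set of real symmetric PSD $n\times n$ matrices $M$ with $m_{ij}=0$ whenever $i\ne j$ and $(i,j)$ is not an edge. $f[M]=(f(m_{ij}))$; $f[-]$ preserves positivity on $\mathcal{P}_H(\mathbb{R})$ if $f[M]\in\mathcal{P}_H(\mathbb{R})$ for all $M\in\mathcal{P}_H(\mathbb{R})$. $\psi_\alpha(x)=\mathrm{sgn}(x)|x|^\alpha$, $\phi_\alpha(x)=|x|^\alpha$ ($x\ne0$), $\psi_\alpha(0)=\phi_\alpha(0)=0$; $\mathcal{H}_H^\psi$ (resp. $\mathcal{H}_H^\phi$) is the set of $\alpha\in\mathbb{R}$ such that $\psi_\alpha[-]$ (resp. $\phi_\alpha[-]$) preserves positivity on $\mathcal{P}_H(\mathbb{R})$. *)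

theory Defs
  imports Complex_Main
begin

type_synonym 'a sgraph = "'a set \<times> 'a set set"

definition verts :: "'a sgraph \<Rightarrow> 'a set" where "verts G = fst G"
definition edges :: "'a sgraph \<Rightarrow> 'a set set" where "edges G = snd G"

definition wf_graph :: "'a sgraph \<Rightarrow> bool" where
  "wf_graph G \<longleftrightarrow> finite (verts G) \<and>
     (\<forall>e\<in>edges G. \<exists>u v. u \<noteq> v \<and> u \<in> verts G \<and> v \<in> verts G \<and> e = {u, v})"

definition adj :: "'a sgraph \<Rightarrow> 'a \<Rightarrow> 'a \<Rightarrow> bool" where
  "adj G u v \<longleftrightarrow> {u, v} \<in> edges G"

definition connected_graph :: "'a sgraph \<Rightarrow> bool" where
  "connected_graph G \<longleftrightarrow> (\<forall>u\<in>verts G. \<forall>v\<in>verts G. (adj G)\<^sup>*\<^sup>* u v)"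

definition coalescence2 :: "'a sgraph \<Rightarrow> 'a sgraph \<Rightarrow> 'a sgraph \<Rightarrow> bool" where
  "coalescence2 G H1 H2 \<longleftrightarrow> (\<exists>f1 f2.
      inj_on f1 (verts H1) \<and> inj_on f2 (verts H2) \<and>
      verts G = f1 ` verts H1 \<union> f2 ` verts H2 \<and>
      card (f1 ` verts H1 \<inter> f2 ` verts H2) = 1 \<and>
      edges G = (image f1) ` edges H1 \<union> (image f2) ` edges H2)"

definition graph_iso :: "'a sgraph \<Rightarrow> 'a sgraph \<Rightarrow> bool" where
  "graph_iso G H \<longleftrightarrow> (\<exists>f. bij_betw f (verts H) (verts G) \<and> edges G = (image f) ` edges H)"

inductive coalescence :: "'a sgraph list \<Rightarrow> 'a sgraph \<Rightarrow> bool" where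
  base: "graph_iso G H \<Longrightarrow> coalescence [H] G"
| step: "coalescence Hs H \<Longrightarrow> coalescence2 G H Hk \<Longrightarrow> coalescence (Hs @ [Hk]) G"

text \<open>Real symmetric PSD matrices indexed by V (entries outside V x V are irrelevant).\<close>
definition psd_on :: "'a set \<Rightarrow> ('a \<Rightarrow> 'a \<Rightarrow> real) \<Rightarrow> bool" where
  "psd_on V M \<longleftrightarrow> (\<forall>i\<in>V. \<forall>j\<in>V. M i j = M j i) \<and>
     (\<forall>x::'a \<Rightarrow> real. 0 \<le> (\<Sum>i\<in>V. \<Sum>j\<in>V. x i * M i j * x j))"

definition in_PG :: "'a sgraph \<Rightarrow> ('a \<Rightarrow> 'a \<Rightarrow> real) \<Rightarrow> bool" where
  "in_PG G M \<longleftrightarrow> psd_on (verts G) M \<and>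
     (\<forall>i\<in>verts G. \<forall>j\<in>verts G. i \<noteq> j \<and> \<not> adj G i j \<longrightarrow> M i j = 0)"

definition preserves_pos :: "(real \<Rightarrow> real) \<Rightarrow> 'a sgraph \<Rightarrow> bool" where
  "preserves_pos f G \<longleftrightarrow> (\<forall>M. in_PG G M \<longrightarrow> in_PG G (\<lambda>i j. f (M i j)))"

definition superadditive_nonneg :: "(real \<Rightarrow> real) \<Rightarrow> bool" where
  "superadditive_nonneg f \<longleftrightarrow> (\<forall>x\<ge>0. \<forall>y\<ge>0. f (x + y) \<ge> f x + f y)"

definition psi :: "real \<Rightarrow> real \<Rightarrow> real" where
  "psi \<alpha> x = (if x = 0 then 0 else sgn x * \<bar>x\<bar> powr \<alpha>)"

definition phi :: "real \<Rightarrow> real \<Rightarrow> real" where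
  "phi \<alpha> x = (if x = 0 then 0 else \<bar>x\<bar> powr \<alpha>)"

definition H_psi :: "'a sgraph \<Rightarrow> real set" where
  "H_psi G = {\<alpha>. preserves_pos (psi \<alpha>) G}"

definition H_phi :: "'a sgraph \<Rightarrow> real set" where
  "H_phi G = {\<alpha>. preserves_pos (phi \<alpha>) G}"

end

theory Submission
  imports Defs "HOL-Analysis.Analysis"
begin

text \<open>
  Let \<open>c\<close> be the cut vertex of a coalescence of graphs on \<open>A\<close> and \<open>B\<close>. A PSD matrix \<open>M\<close>
  supported on the coalescence vanishes between \<open>A - {c}\<close> and \<open>B - {c}\<close>, so splitting
  \<open>M c c = s + (M c c - s)\<close> with \<open>s\<close> a Schur-complement value writes \<open>M\<close> as a sum of PSD
  matrices supported on the two pieces. If \<open>f\<close> preserves positivity on both pieces and is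
  superadditive, \<open>f[M]\<close> is the sum of their images plus the nonnegative correction
  \<open>f (M c c) - f s - f (M c c - s)\<close> at \<open>(c, c)\<close>.

  Conversely, a coalescence of graphs with edges contains an induced path \<open>a - c - b\<close>. Testing
  \<open>f[x (e_a + e_c)(e_a + e_c)^T + y (e_c + e_b)(e_c + e_b)^T]\<close> against \<open>e_a - e_c + e_b\<close>
  yields superadditivity, and rank-one matrices on an edge yield \<open>f \<ge> 0\<close> and
  \<open>f (\<surd>(a b))\<^sup>2 \<le> f a * f b\<close> on \<open>[0, \<infinity>)\<close>. Such an \<open>f\<close> is nondecreasing and its ratios along
  geometric progressions are nondecreasing, which with Bernoulli's inequality forces continuity.
  For powers, \<open>x powr \<alpha>\<close> is superadditive on \<open>[0, \<infinity>)\<close> exactly when \<open>\<alpha> \<ge> 1\<close>.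
\<close>

section \<open>Continuity of superadditive, multiplicatively mid-convex functions\<close>

definition mult_midconvex :: "(real \<Rightarrow> real) \<Rightarrow> bool" where
  "mult_midconvex f \<longleftrightarrow> (\<forall>a\<ge>0. \<forall>b\<ge>0. f (sqrt (a * b))^2 \<le> f a * f b)"

lemma mult_midconvexD:
  assumes "mult_midconvex f" "0 \<le> a" "0 \<le> b" "0 \<le> m" "m * m = a * b"
  shows "f m ^ 2 \<le> f a * f b"
proof -
  have "sqrt (a * b) = m" using assms(4,5) by (metis real_sqrt_abs2 abs_of_nonneg)
  then show ?thesis using assms(1-3) unfolding mult_midconvex_def by metis
qed

lemma superadditive_mono:
  assumes "superadditive_nonneg f" "\<forall>x\<ge>0. 0 \<le> f x" "0 \<le> x" "x \<le> y"
  shows "f x \<le> f y"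
proof -
  have "f x + f (y - x) \<le> f (x + (y - x))"
    using assms(1,3,4) unfolding superadditive_nonneg_def by (meson diff_ge_0_iff_ge)
  moreover have "0 \<le> f (y - x)" using assms(2,4) by simp
  ultimately show ?thesis by simp
qed

lemma superadditive_of_nat_mult:
  assumes "f 0 = 0" "superadditive_nonneg f" "0 \<le> x"
  shows "real n * f x \<le> f (real n * x)"
proof (induction n)
  case 0 then show ?case using assms(1) by simp
next
  case (Suc n)
  have "f (real n * x) + f x \<le> f (real n * x + x)"
    using assms(2,3) unfolding superadditive_nonneg_def by simp
  then show ?case using Suc by (simp add: algebra_simps)
qed

lemma mult_midconvex_ratio_mono:
  assumes pos: "\<forall>t>0. f t > 0" and mc: "mult_midconvex f" and s: "s > 0" and q: "q > 0"
  shows "f (s * q) / f s * f (s * q ^ k) \<le> f (s * q ^ Suc k)"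
proof (induction k)
  case 0
  have "f s > 0" using pos s by simp
  then show ?case by simp
next
  case (Suc k)
  define \<rho> u v w where "\<rho> = f (s * q) / f s" and "u = f (s * q ^ k)"
    and "v = f (s * q ^ Suc k)" and "w = f (s * q ^ Suc (Suc k))"
  have "u > 0" "v > 0" unfolding u_def v_def using pos s q by simp_all
  have "(s * q ^ Suc k) * (s * q ^ Suc k) = (s * q ^ k) * (s * q ^ Suc (Suc k))"
    by (simp add: algebra_simps)
  then have "v ^ 2 \<le> u * w" unfolding u_def v_def w_def using s q
    by (intro mult_midconvexD[OF mc]) simp_all
  have "\<rho> * u \<le> v" using Suc unfolding \<rho>_def u_def v_def by simp
  then have "u * (\<rho> * v) \<le> v * v" using \<open>v > 0\<close> by (simp add: mult.left_commute mult_right_mono)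
  also have "\<dots> \<le> u * w" using \<open>v ^ 2 \<le> u * w\<close> by (simp add: power2_eq_square)
  finally have "\<rho> * v \<le> w" using \<open>u > 0\<close> by simp
  then show ?case unfolding \<rho>_def v_def w_def .
qed

lemma mult_midconvex_ratio_pow:
  assumes pos: "\<forall>t>0. f t > 0" and mc: "mult_midconvex f" and s: "s > 0" and q: "q > 0"
  shows "(f (s * q) / f s) ^ k * f s \<le> f (s * q ^ k)"
proof (induction k)
  case 0 then show ?case by simp
next
  case (Suc k)
  define \<rho> where "\<rho> = f (s * q) / f s"
  have "0 \<le> \<rho>" unfolding \<rho>_def using pos s q by (simp add: less_imp_le)
  have "\<rho> ^ Suc k * f s = \<rho> * (\<rho> ^ k * f s)" by simp
  also have "\<dots> \<le> \<rho> * f (s * q ^ k)" using Suc \<open>0 \<le> \<rho>\<close> unfolding \<rho>_def by (rule mult_left_mono)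
  also have "\<dots> \<le> f (s * q ^ Suc k)" unfolding \<rho>_def by (rule mult_midconvex_ratio_mono[OF pos mc s q])
  finally show ?case unfolding \<rho>_def .
qed

text \<open>Bernoulli's inequality turns the geometric growth of the ratios \<open>f (s q^k) / f s\<close> into a
  bound on a single increment.\<close>

lemma superadditive_increment_bound:
  assumes pos: "\<forall>t>0. f t > 0" and nn: "\<forall>x\<ge>0. 0 \<le> f x" and sa: "superadditive_nonneg f"
    and mc: "mult_midconvex f" and s: "s > 0" and sx: "s \<le> x" and xn: "x ^ n \<le> 2 * s ^ n"
  shows "real n * (f x - f s) \<le> f (2 * s)"
proof -
  define q \<rho> where "q = x / s" and "\<rho> = f x / f s"
  have q: "q \<ge> 1" "x = s * q" "q ^ n \<le> 2" using s sx xn by (simp_all add: q_def field_simps power_divide)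
  have fs: "f s > 0" using pos s by simp
  have "f s \<le> f x" using superadditive_mono[OF sa nn] s sx by simp
  then have "\<rho> \<ge> 1" unfolding \<rho>_def using fs by simp
  then have "1 + real n * (\<rho> - 1) \<le> \<rho> ^ n" using Bernoulli_inequality[of "\<rho> - 1" n] by simp
  then have "(1 + real n * (\<rho> - 1)) * f s \<le> \<rho> ^ n * f s" using fs by simp
  also have "\<dots> \<le> f (s * q ^ n)"
    unfolding \<rho>_def q(2) using q(1) by (intro mult_midconvex_ratio_pow[OF pos mc s]) simp
  also have "\<dots> \<le> f (2 * s)" using superadditive_mono[OF sa nn] s q by simp
  finally show ?thesis unfolding \<rho>_def using fs by (simp add: algebra_simps)
qed

lemma superadditive_small_values:
  assumes f0: "f 0 = 0" and nn: "\<forall>x\<ge>0. 0 \<le> f x" and sa: "superadditive_nonneg f" and e: "e > 0"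
  shows "\<exists>d>0. \<forall>x. 0 \<le> x \<longrightarrow> x < d \<longrightarrow> f x < e"
proof -
  obtain n :: nat where n: "f 1 / e < real n" using reals_Archimedean2 by blast
  have "0 \<le> f 1 / e" using nn e by simp
  then have np: "real n > 0" using n by linarith
  have "f 1 < e * real n" using n e by (simp add: field_simps)
  have "f x < e" if x: "0 \<le> x" "x < 1 / real n" for x
  proof -
    have "real n * x \<le> 1" using x np by (simp add: field_simps)
    then have "real n * f x \<le> f 1"
      using superadditive_of_nat_mult[OF f0 sa x(1)] superadditive_mono[OF sa nn] x np
      by (meson order_trans mult_nonneg_nonneg of_nat_0_le_iff)
    then have "real n * f x < real n * e" using \<open>f 1 < e * real n\<close> by (simp add: mult.commute)
    then show ?thesis using np by simp
  qed
  then show ?thesis using np by (intro exI[of _ "1 / real n"]) simp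
qed

lemma mult_midconvex_continuous_at_pos:
  assumes pos: "\<forall>t>0. f t > 0" and nn: "\<forall>x\<ge>0. 0 \<le> f x" and sa: "superadditive_nonneg f"
    and mc: "mult_midconvex f" and t: "t > 0" and e: "e > 0"
  shows "\<exists>d>0. \<forall>x\<ge>0. \<bar>x - t\<bar> < d \<longrightarrow> \<bar>f x - f t\<bar> < e"
proof -
  have mono: "f x \<le> f y" if "0 \<le> x" "x \<le> y" for x y using superadditive_mono[OF sa nn that] .
  obtain n :: nat where n: "f (2 * t) / e < real n" using reals_Archimedean2 by blast
  have "0 \<le> f (2 * t) / e" using nn e t by simp
  then have np: "real n > 0" using n by linarith
  have fe: "f (2 * t) / real n < e" using n e np by (simp add: field_simps)
  define r where "r = root n 2"
  have r1: "r > 1" and rn: "r ^ n = 2" unfolding r_def using np by simp_all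
  have bound: "real n * (f y - f s) \<le> f (2 * s)" if "0 < s" "s \<le> y" "y < r * s" for s y
  proof (rule superadditive_increment_bound[OF pos nn sa mc that(1,2)])
    have "y ^ n \<le> (r * s) ^ n" using that by (intro power_mono) simp_all
    then show "y ^ n \<le> 2 * s ^ n" by (simp add: power_mult_distrib rn)
  qed
  text \<open>Within distance \<open>d\<close> of \<open>t\<close>, the larger of \<open>x\<close> and \<open>t\<close> is less than \<open>r\<close> times the smaller.\<close>
  define d where "d = t * (1 - 1 / r)"
  have "2 * r - 1 \<le> r * r" using zero_le_power2[of "r - 1"] by (simp add: power2_eq_square algebra_simps)
  then have r_ge: "2 - 1 / r \<le> r" using r1 by (simp add: field_simps)
  have "\<bar>f x - f t\<bar> < e" if x: "0 \<le> x" "\<bar>x - t\<bar> < d" for x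
  proof (cases "t \<le> x")
    case True
    have "x < t * (2 - 1 / r)" using x unfolding d_def by (simp add: algebra_simps)
    also have "\<dots> \<le> r * t" using t r_ge by simp
    finally have "real n * (f x - f t) \<le> f (2 * t)" using bound t True by simp
    then have "f x - f t \<le> f (2 * t) / real n" using np by (simp add: field_simps)
    then show ?thesis using mono[of t x] t True fe by simp
  next
    case False
    have "t - d = t / r" unfolding d_def using r1 by (simp add: field_simps)
    then have "t / r < x" using x by linarith
    then have "t < r * x" using r1 by (simp add: field_simps)
    moreover have "0 < r * x" using t \<open>t < r * x\<close> by linarith
    then have xp: "x > 0" using r1 by (simp add: zero_less_mult_iff)
    then have "real n * (f t - f x) \<le> f (2 * x)" using bound[OF xp _ \<open>t < r * x\<close>] False by simp
    moreover have "f (2 * x) \<le> f (2 * t)" using mono xp False by simp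
    ultimately have "f t - f x \<le> f (2 * t) / real n" using np by (simp add: field_simps)
    then show ?thesis using mono[of x t] xp False fe by simp
  qed
  moreover have "d > 0" unfolding d_def using r1 t by (simp add: field_simps)
  ultimately show ?thesis by blast
qed

lemma mult_midconvex_vanishing:
  assumes nn: "\<forall>x\<ge>0. 0 \<le> f x" and sa: "superadditive_nonneg f" and mc: "mult_midconvex f"
    and t: "t > 0" "f t = 0" and x: "x \<ge> 0"
  shows "f x = 0"
proof (cases "x \<le> t")
  case True
  then show ?thesis using superadditive_mono[OF sa nn x True] nn x t by force
next
  case False
  have "x * x = t * (x * x / t)" using t by simp
  then have "f x ^ 2 \<le> f t * f (x * x / t)" using t x by (intro mult_midconvexD[OF mc]) simp_all
  then show ?thesis using t by simp
qed

lemma superadditive_mult_midconvex_continuous: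
  assumes f0: "f 0 = 0" and nn: "\<forall>x\<ge>0. 0 \<le> f x" and sa: "superadditive_nonneg f"
    and mc: "mult_midconvex f"
  shows "continuous_on {0..} f"
proof (cases "\<exists>t>0. f t = 0")
  case True
  then obtain t where "t > 0" "f t = 0" by blast
  then have "\<forall>x\<in>{0..}. f x = 0" using mult_midconvex_vanishing[OF nn sa mc] by simp
  then show ?thesis using continuous_on_cong[of "{0..}" "{0..}" f "\<lambda>_. 0"] by simp
next
  case False
  then have pos: "\<forall>t>0. f t > 0" using nn by (metis less_eq_real_def)
  show ?thesis unfolding continuous_on_iff dist_real_def
  proof (intro ballI allI impI)
    fix t e :: real assume "t \<in> {0..}" "e > 0"
    show "\<exists>d>0. \<forall>x\<in>{0..}. \<bar>x - t\<bar> < d \<longrightarrow> \<bar>f x - f t\<bar> < e"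
    proof (cases "t = 0")
      case True
      obtain d where "d > 0" "\<forall>x. 0 \<le> x \<longrightarrow> x < d \<longrightarrow> f x < e"
        using superadditive_small_values[OF f0 nn sa \<open>e > 0\<close>] by blast
      then show ?thesis using True f0 nn by (intro exI[of _ d]) auto
    next
      case False
      then have "t > 0" using \<open>t \<in> {0..}\<close> by simp
      then obtain d where "d > 0" "\<forall>x\<ge>0. \<bar>x - t\<bar> < d \<longrightarrow> \<bar>f x - f t\<bar> < e"
        using mult_midconvex_continuous_at_pos[OF pos nn sa mc _ \<open>e > 0\<close>] by blast
      then show ?thesis by (intro exI[of _ d]) auto
    qed
  qed
qed

section \<open>Quadratic forms and PSD matrices glued at a cut vertex\<close>

definition quad :: "'a set \<Rightarrow> ('a \<Rightarrow> 'a \<Rightarrow> real) \<Rightarrow> ('a \<Rightarrow> real) \<Rightarrow> real" where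
  "quad S N x = (\<Sum>i\<in>S. \<Sum>j\<in>S. x i * N i j * x j)"

definition diag_update :: "('a \<Rightarrow> 'a \<Rightarrow> real) \<Rightarrow> 'a \<Rightarrow> real \<Rightarrow> 'a \<Rightarrow> 'a \<Rightarrow> real" where
  "diag_update N c s = (\<lambda>i j. if i = c \<and> j = c then s else N i j)"

lemma psd_on_iff_quad:
  "psd_on V M \<longleftrightarrow> (\<forall>i\<in>V. \<forall>j\<in>V. M i j = M j i) \<and> (\<forall>x. 0 \<le> quad V M x)"
  unfolding psd_on_def quad_def by simp

lemma quad_eq_sum_pairs: "quad S N x = (\<Sum>(i, j)\<in>S \<times> S. x i * N i j * x j)"
  unfolding quad_def by (rule sum.cartesian_product)

lemma quad_mono_neutral:
  assumes "finite V" "S \<subseteq> V" "\<forall>i\<in>V. \<forall>j\<in>V. i \<notin> S \<or> j \<notin> S \<longrightarrow> x i * N i j * x j = 0"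
  shows "quad V N x = quad S N x"
  unfolding quad_eq_sum_pairs
proof (rule sum.mono_neutral_right)
  show "\<forall>p\<in>V \<times> V - S \<times> S. (case p of (i, j) \<Rightarrow> x i * N i j * x j) = 0"
    using assms(3) by fastforce
qed (use assms(1,2) in auto)

lemma quad_cong:
  assumes "\<forall>i\<in>S. x i = y i" "\<forall>i\<in>S. \<forall>j\<in>S. N i j = N' i j"
  shows "quad S N x = quad S N' y"
  unfolding quad_def using assms by (intro sum.cong refl) auto

lemma quad_reindex:
  assumes "inj_on g S"
  shows "quad (g ` S) N x = quad S (\<lambda>u v. N (g u) (g v)) (\<lambda>u. x (g u))"
  unfolding quad_def using assms by (simp add: sum.reindex)

lemma quad_scale: "quad S N (\<lambda>i. t * x i) = t ^ 2 * quad S N x"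
  unfolding quad_def sum_distrib_left power2_eq_square
  by (intro sum.cong refl) (simp add: algebra_simps)

lemma quad_add: "quad S (\<lambda>i j. N1 i j + N2 i j) x = quad S N1 x + quad S N2 x"
  unfolding quad_def by (simp add: algebra_simps sum.distrib)

lemma quad_rank1: "quad S (\<lambda>i j. t * u i * u j) x = t * (\<Sum>i\<in>S. x i * u i) ^ 2"
proof -
  have "t * (\<Sum>i\<in>S. x i * u i) ^ 2 = (\<Sum>i\<in>S. \<Sum>j\<in>S. t * ((x i * u i) * (x j * u j)))"
    unfolding power2_eq_square sum_product by (simp add: sum_distrib_left)
  also have "\<dots> = quad S (\<lambda>i j. t * u i * u j) x"
    unfolding quad_def by (intro sum.cong refl) (simp add: algebra_simps)
  finally show ?thesis by simp
qed

lemma quad_unit_vector: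
  assumes "finite S" "c \<in> S"
  shows "quad S N ((\<lambda>_. 0)(c := 1)) = N c c"
proof -
  have "quad S N ((\<lambda>_. 0)(c := 1)) = quad {c} N ((\<lambda>_. 0)(c := 1))"
    using assms by (intro quad_mono_neutral) auto
  then show ?thesis by (simp add: quad_def)
qed

lemma quad_normalize:
  assumes "x c \<noteq> 0"
  shows "quad S N x = (x c) ^ 2 * quad S N ((\<lambda>i. x i / x c)(c := 1))"
proof -
  have "(\<lambda>i. x i / x c)(c := 1) = (\<lambda>i. x i / x c)" using assms by auto
  moreover have "x = (\<lambda>i. x c * (x i / x c))" using assms by simp
  ultimately show ?thesis by (metis quad_scale)
qed

lemma quad_diag_update:
  assumes "finite S" "c \<in> S"
  shows "quad S (diag_update N c s) x = quad S N x + (x c) ^ 2 * (s - N c c)"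
proof -
  have "quad S (diag_update N c s) x = (\<Sum>p\<in>S \<times> S. (case p of (i, j) \<Rightarrow> x i * N i j * x j)
      + (if p = (c, c) then (x c) ^ 2 * (s - N c c) else 0))"
    unfolding quad_eq_sum_pairs diag_update_def
    by (intro sum.cong refl) (auto simp: algebra_simps power2_eq_square split: if_splits)
  also have "\<dots> = quad S N x + (x c) ^ 2 * (s - N c c)"
    unfolding sum.distrib quad_eq_sum_pairs using assms by simp
  finally show ?thesis .
qed

lemma quad_union_cut_vertex:
  assumes "finite A" "finite B" "A \<inter> B = {c}"
    and "\<forall>i\<in>A - {c}. \<forall>j\<in>B - {c}. N i j = 0 \<and> N j i = 0"
  shows "quad (A \<union> B) N x = quad A N x + quad B N x - (x c) ^ 2 * N c c"
proof -
  define h where "h = (\<lambda>(i, j). x i * N i j * x j)"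
  have "quad (A \<union> B) N x = sum h (A \<times> A \<union> B \<times> B)"
    unfolding quad_eq_sum_pairs h_def[symmetric]
  proof (rule sum.mono_neutral_right)
    show "\<forall>p\<in>(A \<union> B) \<times> (A \<union> B) - (A \<times> A \<union> B \<times> B). h p = 0"
    proof
      fix p assume p: "p \<in> (A \<union> B) \<times> (A \<union> B) - (A \<times> A \<union> B \<times> B)"
      obtain i j where ij: "p = (i, j)" by force
      have "(i \<in> A - {c} \<and> j \<in> B - {c}) \<or> (i \<in> B - {c} \<and> j \<in> A - {c})"
        using p assms(3) unfolding ij by auto
      then show "h p = 0" using assms(4) unfolding h_def ij by auto
    qed
  qed (use assms(1,2) in auto)
  also have "\<dots> = sum h (A \<times> A) + sum h (B \<times> B) - sum h (A \<times> A \<inter> B \<times> B)"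
    using sum.union_inter[of "A \<times> A" "B \<times> B" h] assms(1,2) by simp
  also have "A \<times> A \<inter> B \<times> B = {(c, c)}" using assms(3) by auto
  finally show ?thesis unfolding quad_eq_sum_pairs h_def by (simp add: power2_eq_square algebra_simps)
qed

lemma psd_on_subset:
  assumes "finite V" "psd_on V M" "S \<subseteq> V"
  shows "psd_on S M"
  unfolding psd_on_iff_quad
proof (intro conjI allI)
  show "\<forall>i\<in>S. \<forall>j\<in>S. M i j = M j i" using assms unfolding psd_on_iff_quad by blast
  fix x :: "'a \<Rightarrow> real"
  define y where "y = (\<lambda>i. if i \<in> S then x i else 0)"
  have "quad V M y = quad S M y" using assms by (intro quad_mono_neutral) (auto simp: y_def)
  also have "\<dots> = quad S M x" by (rule quad_cong) (auto simp: y_def)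
  finally show "0 \<le> quad S M x" using assms unfolding psd_on_iff_quad by metis
qed

lemma psd_on_cong:
  assumes "\<forall>i\<in>V. \<forall>j\<in>V. N i j = N' i j"
  shows "psd_on V N \<longleftrightarrow> psd_on V N'"
proof -
  have "quad V N x = quad V N' x" for x using assms by (intro quad_cong) auto
  then show ?thesis unfolding psd_on_iff_quad using assms by auto
qed

lemma psd_on_image_iff:
  assumes "inj_on g V"
  shows "psd_on (g ` V) N \<longleftrightarrow> psd_on V (\<lambda>u v. N (g u) (g v))"
proof -
  have "(\<forall>x. 0 \<le> quad V (\<lambda>u v. N (g u) (g v)) (\<lambda>u. x (g u))) \<longleftrightarrow>
        (\<forall>y. 0 \<le> quad V (\<lambda>u v. N (g u) (g v)) y)"
  proof safe
    fix y assume "\<forall>x. 0 \<le> quad V (\<lambda>u v. N (g u) (g v)) (\<lambda>u. x (g u))"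
    from this[rule_format, of "\<lambda>w. y (inv_into V g w)"]
    have "0 \<le> quad V (\<lambda>u v. N (g u) (g v)) (\<lambda>u. y (inv_into V g (g u)))" .
    also have "\<dots> = quad V (\<lambda>u v. N (g u) (g v)) y"
      using assms by (intro quad_cong) (simp_all add: inv_into_f_f)
    finally show "0 \<le> quad V (\<lambda>u v. N (g u) (g v)) y" .
  qed simp
  then show ?thesis unfolding psd_on_iff_quad quad_reindex[OF assms] by blast
qed

lemma psd_on_extend_zero:
  assumes "finite W" "S \<subseteq> W" "psd_on S N" "\<forall>i\<in>W. \<forall>j\<in>W. i \<notin> S \<or> j \<notin> S \<longrightarrow> N i j = 0"
  shows "psd_on W N"
  unfolding psd_on_iff_quad
proof (intro conjI allI ballI)
  fix i j assume "i \<in> W" "j \<in> W"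
  then show "N i j = N j i" using assms(3,4) unfolding psd_on_iff_quad by (cases "i \<in> S \<and> j \<in> S") auto
next
  fix x
  have "quad W N x = quad S N x" using assms(1,2,4) by (intro quad_mono_neutral) auto
  then show "0 \<le> quad W N x" using assms(3) unfolding psd_on_iff_quad by simp
qed

lemma psd_on_diag_update:
  assumes "finite S" "c \<in> S" "psd_on S N" "\<forall>y. N c c - quad S N (y(c := 1)) \<le> s"
  shows "psd_on S (diag_update N c s)"
  unfolding psd_on_iff_quad
proof (intro conjI allI ballI)
  fix i j assume "i \<in> S" "j \<in> S"
  then show "diag_update N c s i j = diag_update N c s j i"
    using assms(3) unfolding psd_on_iff_quad diag_update_def by auto
next
  fix x
  have eq: "quad S (diag_update N c s) x = quad S N x + (x c) ^ 2 * (s - N c c)"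
    by (rule quad_diag_update[OF assms(1,2)])
  show "0 \<le> quad S (diag_update N c s) x"
  proof (cases "x c = 0")
    case True
    then show ?thesis using eq assms(3) unfolding psd_on_iff_quad by simp
  next
    case False
    define y where "y = (\<lambda>i. x i / x c)"
    have "0 \<le> quad S N (y(c := 1)) + (s - N c c)" using assms(4)[rule_format, of y] by simp
    then have "0 \<le> (x c) ^ 2 * (quad S N (y(c := 1)) + (s - N c c))" by simp
    also have "\<dots> = quad S (diag_update N c s) x"
      unfolding eq quad_normalize[where x=x and c=c, OF False, of S N] y_def by (simp add: algebra_simps)
    finally show ?thesis .
  qed
qed

text \<open>The share \<open>s\<close> of the entry \<open>(c, c)\<close> given to \<open>A\<close> is the supremum of
  \<open>N c c - quad A N y\<close> over vectors with \<open>y c = 1\<close>.\<close>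

lemma psd_on_split_cut_vertex:
  assumes fin: "finite A" "finite B" and AB: "A \<inter> B = {c}" and psd: "psd_on (A \<union> B) N"
    and cross: "\<forall>i\<in>A - {c}. \<forall>j\<in>B - {c}. N i j = 0"
  obtains s where "0 \<le> s" "s \<le> N c c"
    "psd_on A (diag_update N c s)" "psd_on B (diag_update N c (N c c - s))"
proof -
  define m where "m = N c c"
  have c: "c \<in> A" "c \<in> B" using AB by auto
  have psdA: "psd_on A N" and psdB: "psd_on B N" using psd_on_subset[OF _ psd] fin by auto
  have cross2: "\<forall>i\<in>A - {c}. \<forall>j\<in>B - {c}. N i j = 0 \<and> N j i = 0"
    using cross psd unfolding psd_on_iff_quad by auto
  have glue: "m \<le> quad A N (y1(c := 1)) + quad B N (y2(c := 1))" for y1 y2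
  proof -
    define x where "x = (\<lambda>i. if i = c then 1 else if i \<in> A then y1 i else y2 i)"
    have "0 \<le> quad (A \<union> B) N x" using psd unfolding psd_on_iff_quad by blast
    also have "\<dots> = quad A N x + quad B N x - m"
      unfolding m_def quad_union_cut_vertex[OF fin AB cross2] by (simp add: x_def)
    also have "quad A N x = quad A N (y1(c := 1))" by (rule quad_cong) (auto simp: x_def)
    also have "quad B N x = quad B N (y2(c := 1))" using AB by (intro quad_cong) (auto simp: x_def)
    finally show ?thesis by linarith
  qed
  define s where "s = (SUP y. m - quad A N (y(c := 1)))"
  have bdd: "bdd_above (range (\<lambda>y. m - quad A N (y(c := 1))))"
    using psdA unfolding psd_on_iff_quad by (intro bdd_aboveI[of _ m]) auto
  have s_upper: "m - quad A N (y(c := 1)) \<le> s" for y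
    unfolding s_def by (rule cSUP_upper[OF _ bdd]) simp
  have s_least: "s \<le> quad B N (y(c := 1))" for y
    unfolding s_def using glue by (intro cSUP_least) (auto simp: algebra_simps)
  show ?thesis
  proof
    show "0 \<le> s" using s_upper[of "\<lambda>_. 0"] quad_unit_vector[OF fin(1) c(1)] m_def by simp
    show "s \<le> N c c" using s_least[of "\<lambda>_. 0"] quad_unit_vector[OF fin(2) c(2)] by simp
    show "psd_on A (diag_update N c s)"
      using s_upper unfolding m_def by (intro psd_on_diag_update[OF fin(1) c(1) psdA]) simp
    show "psd_on B (diag_update N c (N c c - s))"
      using s_least by (intro psd_on_diag_update[OF fin(2) c(2) psdB]) (simp add: algebra_simps)
  qed
qed

lemma psd_on_glue_cut_vertex:
  assumes fin: "finite A" "finite B" and AB: "A \<inter> B = {c}"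
    and sym: "\<forall>i\<in>A \<union> B. \<forall>j\<in>A \<union> B. N i j = N j i"
    and cross: "\<forall>i\<in>A - {c}. \<forall>j\<in>B - {c}. N i j = 0"
    and psdA: "psd_on A (diag_update N c p)" and psdB: "psd_on B (diag_update N c q)"
    and pq: "p + q \<le> N c c"
  shows "psd_on (A \<union> B) N"
  unfolding psd_on_iff_quad
proof (intro conjI allI)
  show "\<forall>i\<in>A \<union> B. \<forall>j\<in>A \<union> B. N i j = N j i" by (rule sym)
  fix x
  have c: "c \<in> A" "c \<in> B" using AB by auto
  have cross2: "\<forall>i\<in>A - {c}. \<forall>j\<in>B - {c}. N i j = 0 \<and> N j i = 0" using cross sym by auto
  have "quad (A \<union> B) N x = quad A (diag_update N c p) x + quad B (diag_update N c q) x
      + (x c) ^ 2 * (N c c - p - q)"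
    unfolding quad_union_cut_vertex[OF fin AB cross2] quad_diag_update[OF fin(1) c(1)]
      quad_diag_update[OF fin(2) c(2)] by (simp add: algebra_simps)
  moreover have "0 \<le> (x c) ^ 2 * (N c c - p - q)" using pq by simp
  ultimately show "0 \<le> quad (A \<union> B) N x"
    using psdA psdB unfolding psd_on_iff_quad by (smt (verit))
qed


section \<open>Graphs, embeddings and coalescences\<close>

lemma adj_sym: "adj G i j \<longleftrightarrow> adj G j i"
  unfolding adj_def by (simp add: insert_commute)

lemma sgraph_eq_pair: "G = (verts G, edges G)"
  unfolding verts_def edges_def by simp

lemma verts_pair [simp]: "verts (V, E) = V"
  unfolding verts_def by simp

lemma edges_pair [simp]: "edges (V, E) = E"
  unfolding edges_def by simp

lemma wf_graph_finite: "wf_graph G \<Longrightarrow> finite (verts G)"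
  unfolding wf_graph_def by simp

lemma wf_graph_edge_subset:
  assumes "wf_graph G" "e \<in> edges G"
  shows "e \<subseteq> verts G"
proof -
  obtain u v where "u \<in> verts G" "v \<in> verts G" "e = {u, v}"
    using assms unfolding wf_graph_def by blast
  then show ?thesis by simp
qed

lemma wf_graph_edge_ends:
  assumes "wf_graph G" "{u, v} \<in> edges G"
  shows "u \<noteq> v" "u \<in> verts G" "v \<in> verts G"
proof -
  obtain p q where "p \<noteq> q" "p \<in> verts G" "q \<in> verts G" "{u, v} = {p, q}"
    using assms unfolding wf_graph_def by blast
  then show "u \<noteq> v" "u \<in> verts G" "v \<in> verts G" by (auto simp: doubleton_eq_iff)
qed

lemma wf_graph_image:
  assumes "wf_graph H" "inj_on g (verts H)"
  shows "wf_graph (g ` verts H, image g ` edges H)"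
  unfolding wf_graph_def verts_def edges_def fst_conv snd_conv
proof (intro conjI ballI)
  show "finite (g ` fst H)" using wf_graph_finite[OF assms(1)] by (simp add: verts_def)
  fix e assume "e \<in> image g ` snd H"
  then obtain e0 where "e0 \<in> edges H" "e = g ` e0" by (auto simp: edges_def)
  moreover obtain u v where "u \<noteq> v" "u \<in> verts H" "v \<in> verts H" "e0 = {u, v}"
    using assms(1) \<open>e0 \<in> edges H\<close> unfolding wf_graph_def by blast
  ultimately have "g u \<noteq> g v \<and> g u \<in> g ` fst H \<and> g v \<in> g ` fst H \<and> e = {g u, g v}"
    using assms(2) by (auto simp: verts_def inj_on_eq_iff)
  then show "\<exists>x y. x \<noteq> y \<and> x \<in> g ` fst H \<and> y \<in> g ` fst H \<and> e = {x, y}" by blast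
qed

lemma wf_graph_Un:
  assumes "wf_graph (V1, E1)" "wf_graph (V2, E2)"
  shows "wf_graph (V1 \<union> V2, E1 \<union> E2)"
  unfolding wf_graph_def verts_def edges_def fst_conv snd_conv
proof (intro conjI ballI)
  show "finite (V1 \<union> V2)" using assms unfolding wf_graph_def verts_def by simp
  fix e assume "e \<in> E1 \<union> E2"
  then obtain u v where "u \<noteq> v" "u \<in> V1 \<union> V2" "v \<in> V1 \<union> V2" "e = {u, v}"
    using assms unfolding wf_graph_def verts_def edges_def by fastforce
  then show "\<exists>u v. u \<noteq> v \<and> u \<in> V1 \<union> V2 \<and> v \<in> V1 \<union> V2 \<and> e = {u, v}" by blast
qed

lemma graph_isoE:
  assumes "graph_iso G H"
  obtains g where "inj_on g (verts H)" "G = (g ` verts H, image g ` edges H)"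
proof -
  obtain g where g: "bij_betw g (verts H) (verts G)" "edges G = image g ` edges H"
    using assms unfolding graph_iso_def by (elim exE conjE) (rule that; assumption)
  have "G = (verts G, edges G)" by (rule sgraph_eq_pair)
  also have "\<dots> = (g ` verts H, image g ` edges H)" using bij_betw_imp_surj_on[OF g(1)] g(2) by simp
  finally show ?thesis using that bij_betw_imp_inj_on[OF g(1)] by blast
qed

lemma coalescence2E:
  assumes "coalescence2 G H K"
  obtains f1 f2 c where "inj_on f1 (verts H)" "inj_on f2 (verts K)"
    "f1 ` verts H \<inter> f2 ` verts K = {c}"
    "G = (f1 ` verts H \<union> f2 ` verts K, image f1 ` edges H \<union> image f2 ` edges K)"
proof -
  obtain f1 f2 where f: "inj_on f1 (verts H)" "inj_on f2 (verts K)"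
      "verts G = f1 ` verts H \<union> f2 ` verts K" "card (f1 ` verts H \<inter> f2 ` verts K) = 1"
      "edges G = image f1 ` edges H \<union> image f2 ` edges K"
    using assms unfolding coalescence2_def by (elim exE conjE) (rule that; assumption)
  obtain c where "f1 ` verts H \<inter> f2 ` verts K = {c}" using f(4) by (rule card_1_singletonE)
  moreover have "G = (verts G, edges G)" by (rule sgraph_eq_pair)
  ultimately show ?thesis using that f by simp
qed

lemma coalescence_wf_graph:
  assumes "coalescence Hs G" "\<forall>H\<in>set Hs. wf_graph H"
  shows "wf_graph G"
  using assms
proof (induction rule: coalescence.induct)
  case (base G H)
  obtain g where "inj_on g (verts H)" "G = (g ` verts H, image g ` edges H)"
    using base.hyps by (rule graph_isoE)
  then show ?case using base.prems by (simp add: wf_graph_image)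
next
  case (step Hs H G K)
  obtain f1 f2 c where "inj_on f1 (verts H)" "inj_on f2 (verts K)"
    "G = (f1 ` verts H \<union> f2 ` verts K, image f1 ` edges H \<union> image f2 ` edges K)"
    using step.hyps(2) by (rule coalescence2E)
  moreover have "wf_graph H" "wf_graph K" using step by auto
  ultimately show ?case by (simp add: wf_graph_Un wf_graph_image)
qed

lemma no_adj_across:
  assumes "edges G = E1 \<union> E2" "\<forall>e\<in>E1. e \<subseteq> A" "\<forall>e\<in>E2. e \<subseteq> B" "a \<notin> B" "b \<notin> A"
  shows "\<not> adj G a b"
  using assms unfolding adj_def by auto

lemma preserves_pos_embedding:
  assumes fin: "finite (verts G)" and pG: "preserves_pos f G" and f0: "f 0 = 0"
    and inj: "inj_on g (verts H)" and sub: "g ` verts H \<subseteq> verts G"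
    and edge: "\<forall>e\<in>edges H. g ` e \<in> edges G"
  shows "preserves_pos f H"
  unfolding preserves_pos_def
proof (intro allI impI)
  fix M assume inH: "in_PG H M"
  define V where "V = verts H"
  define M' where "M' = (\<lambda>i j. if i \<in> g ` V \<and> j \<in> g ` V
    then M (inv_into V g i) (inv_into V g j) else 0)"
  have M'g: "M' (g u) (g v) = M u v" if "u \<in> V" "v \<in> V" for u v
    using that inj unfolding M'_def V_def by simp
  have img: "psd_on (g ` V) N \<longleftrightarrow> psd_on V (\<lambda>i j. N (g i) (g j))" for N
    using inj unfolding V_def by (rule psd_on_image_iff)
  have pull: "psd_on V (\<lambda>i j. h (M' (g i) (g j))) \<longleftrightarrow> psd_on V (\<lambda>i j. h (M i j))" for h
    by (rule psd_on_cong) (simp add: M'g)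
  have "psd_on V M" and zero: "\<forall>u\<in>V. \<forall>v\<in>V. u \<noteq> v \<and> \<not> adj H u v \<longrightarrow> M u v = 0"
    using inH unfolding in_PG_def V_def by simp_all
  then have "psd_on (g ` V) M'" unfolding img using pull[of id] by simp
  moreover have "\<forall>i\<in>verts G. \<forall>j\<in>verts G. i \<notin> g ` V \<or> j \<notin> g ` V \<longrightarrow> M' i j = 0"
    unfolding M'_def by auto
  ultimately have "psd_on (verts G) M'" by (rule psd_on_extend_zero[OF fin sub[folded V_def]])
  moreover have "M' i j = 0" if "i \<in> verts G" "j \<in> verts G" "i \<noteq> j" "\<not> adj G i j" for i j
  proof (cases "i \<in> g ` V \<and> j \<in> g ` V")
    case True
    then obtain u v where uv: "u \<in> V" "v \<in> V" "i = g u" "j = g v" by blast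
    have "adj G i j" if "adj H u v"
    proof -
      have "g ` {u, v} \<in> edges G" using edge that unfolding adj_def by blast
      then show ?thesis unfolding adj_def uv(3,4) by simp
    qed
    then have "\<not> adj H u v" using \<open>\<not> adj G i j\<close> by blast
    then show ?thesis using zero uv that(3) M'g by auto
  qed (auto simp: M'_def)
  ultimately have "in_PG G M'" unfolding in_PG_def by blast
  then have "in_PG G (\<lambda>i j. f (M' i j))" using pG unfolding preserves_pos_def by blast
  then have "psd_on (verts G) (\<lambda>i j. f (M' i j))" unfolding in_PG_def by blast
  then have "psd_on (g ` V) (\<lambda>i j. f (M' i j))" by (rule psd_on_subset[OF fin _ sub[folded V_def]])
  then have "psd_on V (\<lambda>i j. f (M i j))" unfolding img pull .
  then show "in_PG H (\<lambda>i j. f (M i j))" using zero f0 unfolding in_PG_def V_def by simp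
qed

lemma preserves_pos_image:
  assumes "wf_graph H" "inj_on g (verts H)" "preserves_pos f H" "f 0 = 0"
  shows "preserves_pos f (g ` verts H, image g ` edges H)"
proof (rule preserves_pos_embedding[OF wf_graph_finite[OF assms(1)] assms(3,4)])
  show "inj_on (inv_into (verts H) g) (verts (g ` verts H, image g ` edges H))"
    by (simp add: verts_def inj_on_inv_into)
  show "inv_into (verts H) g ` verts (g ` verts H, image g ` edges H) \<subseteq> verts H"
    by (auto simp: verts_def inv_into_into)
  show "\<forall>e\<in>edges (g ` verts H, image g ` edges H). inv_into (verts H) g ` e \<in> edges H"
  proof
    fix e assume "e \<in> edges (g ` verts H, image g ` edges H)"
    then obtain e0 where e0: "e0 \<in> edges H" "e = g ` e0" by (auto simp: edges_def)
    have "inv_into (verts H) g ` g ` e0 = e0"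
      by (rule inv_into_image_cancel[OF assms(2) wf_graph_edge_subset[OF assms(1) e0(1)]])
    then show "inv_into (verts H) g ` e \<in> edges H" using e0 by simp
  qed
qed

lemma in_PG_restrict:
  assumes "in_PG G M" "psd_on V N" "V \<subseteq> verts G"
    and "\<forall>i\<in>V. \<forall>j\<in>V. i \<noteq> j \<longrightarrow> N i j = M i j"
    and "\<forall>i\<in>V. \<forall>j\<in>V. i \<noteq> j \<longrightarrow> adj G i j \<longrightarrow> adj (V, E) i j"
  shows "in_PG (V, E) N"
  unfolding in_PG_def verts_def fst_conv
proof (intro conjI ballI impI)
  show "psd_on V N" by (rule assms(2))
  fix i j assume ij: "i \<in> V" "j \<in> V" "i \<noteq> j \<and> \<not> adj (V, E) i j"
  then have "M i j = 0" using assms(1,3,5) unfolding in_PG_def by blast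
  then show "N i j = 0" using assms(4) ij by simp
qed

lemma adj_in_piece:
  assumes "adj G i j" "edges G = E \<union> E'" "i \<noteq> j" "i \<in> A" "j \<in> A" "A \<inter> B \<subseteq> {c}"
    and "\<forall>e\<in>E'. e \<subseteq> B"
  shows "adj (V, E) i j"
proof -
  have "{i, j} \<notin> E'"
  proof
    assume "{i, j} \<in> E'"
    then have "i \<in> A \<inter> B" "j \<in> A \<inter> B" using assms(4,5,7) by auto
    then show False using assms(3,6) by blast
  qed
  then show ?thesis using assms(1,2) unfolding adj_def edges_def by simp
qed

lemma preserves_pos_glue:
  assumes fin: "finite A" "finite B" and AB: "A \<inter> B = {c}"
    and E1A: "\<forall>e\<in>E1. e \<subseteq> A" and E2B: "\<forall>e\<in>E2. e \<subseteq> B"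
    and p1: "preserves_pos f (A, E1)" and p2: "preserves_pos f (B, E2)"
    and f0: "f 0 = 0" and sa: "superadditive_nonneg f"
  shows "preserves_pos f (A \<union> B, E1 \<union> E2)"
  unfolding preserves_pos_def
proof (intro allI impI)
  define G where "G = (A \<union> B, E1 \<union> E2)"
  fix M assume "in_PG (A \<union> B, E1 \<union> E2) M"
  then have inG: "in_PG G M" and psd: "psd_on (A \<union> B) M" unfolding G_def in_PG_def by (simp_all add: verts_def)
  have cross: "\<forall>i\<in>A - {c}. \<forall>j\<in>B - {c}. M i j = 0"
  proof (intro ballI)
    fix i j assume ij: "i \<in> A - {c}" "j \<in> B - {c}"
    then have "i \<noteq> j" "i \<notin> B" "j \<notin> A" using AB by auto
    then have "\<not> adj G i j" using E1A E2B by (intro no_adj_across[of G E1 E2 A B]) (simp_all add: G_def edges_def)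
    then show "M i j = 0" using inG ij \<open>i \<noteq> j\<close> unfolding in_PG_def G_def by (simp add: verts_def)
  qed
  obtain s where s: "0 \<le> s" "s \<le> M c c"
    "psd_on A (diag_update M c s)" "psd_on B (diag_update M c (M c c - s))"
    by (rule psd_on_split_cut_vertex[OF fin AB psd cross])
  have comp: "(\<lambda>i j. f (diag_update M c t i j)) = diag_update (\<lambda>i j. f (M i j)) c (f t)" for t
    unfolding diag_update_def by (simp add: fun_eq_iff)
  have EG: "edges G = E1 \<union> E2" "edges G = E2 \<union> E1" unfolding G_def edges_def by auto
  have "in_PG (A, E1) (diag_update M c s)"
  proof (rule in_PG_restrict[OF inG s(3)])
    show "\<forall>i\<in>A. \<forall>j\<in>A. i \<noteq> j \<longrightarrow> adj G i j \<longrightarrow> adj (A, E1) i j"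
      using adj_in_piece[OF _ EG(1) _ _ _ _ E2B] AB by blast
  qed (auto simp: G_def verts_def diag_update_def)
  then have "in_PG (A, E1) (\<lambda>i j. f (diag_update M c s i j))"
    by (rule p1[unfolded preserves_pos_def, rule_format])
  then have psdA: "psd_on A (diag_update (\<lambda>i j. f (M i j)) c (f s))"
    unfolding comp in_PG_def verts_def by simp
  have "in_PG (B, E2) (diag_update M c (M c c - s))"
  proof (rule in_PG_restrict[OF inG s(4)])
    show "\<forall>i\<in>B. \<forall>j\<in>B. i \<noteq> j \<longrightarrow> adj G i j \<longrightarrow> adj (B, E2) i j"
      using adj_in_piece[OF _ EG(2) _ _ _ _ E1A] AB by blast
  qed (auto simp: G_def verts_def diag_update_def)
  then have "in_PG (B, E2) (\<lambda>i j. f (diag_update M c (M c c - s) i j))"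
    by (rule p2[unfolded preserves_pos_def, rule_format])
  then have psdB: "psd_on B (diag_update (\<lambda>i j. f (M i j)) c (f (M c c - s)))"
    unfolding comp in_PG_def verts_def by simp
  have sym: "\<forall>i\<in>A \<union> B. \<forall>j\<in>A \<union> B. f (M i j) = f (M j i)" using psd unfolding psd_on_iff_quad by simp
  have cross_f: "\<forall>i\<in>A - {c}. \<forall>j\<in>B - {c}. f (M i j) = 0" using cross f0 by simp
  have "f s + f (M c c - s) \<le> f (M c c)"
    using sa s(1,2) unfolding superadditive_nonneg_def by (metis add.commute diff_add_cancel diff_ge_0_iff_ge)
  then have "psd_on (A \<union> B) (\<lambda>i j. f (M i j))"
    by (rule psd_on_glue_cut_vertex[OF fin AB sym cross_f psdA psdB])
  then show "in_PG (A \<union> B, E1 \<union> E2) (\<lambda>i j. f (M i j))"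
    using inG f0 unfolding in_PG_def G_def by (simp add: verts_def)
qed

lemma coalescence_preserves_pos_factors:
  assumes "coalescence Hs G" "\<forall>H\<in>set Hs. wf_graph H" "f 0 = 0" "preserves_pos f G"
  shows "\<forall>H\<in>set Hs. preserves_pos f H"
  using assms(1,2,4)
proof (induction rule: coalescence.induct)
  case (base G H)
  obtain g where g: "inj_on g (verts H)" "G = (g ` verts H, image g ` edges H)"
    using base.hyps by (rule graph_isoE)
  have "finite (verts G)" using wf_graph_finite[of H] base.prems(1) g(2) by simp
  then have "preserves_pos f H"
    by (rule preserves_pos_embedding[OF _ base.prems(2) assms(3) g(1)]) (simp_all add: g(2))
  then show ?case by simp
next
  case (step Hs H G K)
  obtain f1 f2 c where f: "inj_on f1 (verts H)" "inj_on f2 (verts K)"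
    "f1 ` verts H \<inter> f2 ` verts K = {c}"
    "G = (f1 ` verts H \<union> f2 ` verts K, image f1 ` edges H \<union> image f2 ` edges K)"
    using step.hyps(2) by (rule coalescence2E)
  have "wf_graph H" "wf_graph K" using coalescence_wf_graph[OF step.hyps(1)] step.prems(1) by simp_all
  then have fin: "finite (verts G)" by (simp add: f(4) wf_graph_finite)
  have "preserves_pos f H"
    by (rule preserves_pos_embedding[OF fin step.prems(2) assms(3) f(1)]) (simp_all add: f(4))
  moreover have "preserves_pos f K"
    by (rule preserves_pos_embedding[OF fin step.prems(2) assms(3) f(2)]) (simp_all add: f(4))
  ultimately show ?case using step.IH step.prems by simp
qed

lemma coalescence_preserves_pos:
  assumes "coalescence Hs G" "\<forall>H\<in>set Hs. wf_graph H" "f 0 = 0" "superadditive_nonneg f"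
    "\<forall>H\<in>set Hs. preserves_pos f H"
  shows "preserves_pos f G"
  using assms(1,2,5)
proof (induction rule: coalescence.induct)
  case (base G H)
  obtain g where "inj_on g (verts H)" "G = (g ` verts H, image g ` edges H)"
    using base.hyps by (rule graph_isoE)
  then show ?case using preserves_pos_image base.prems assms(3) by simp
next
  case (step Hs H G K)
  obtain f1 f2 c where f: "inj_on f1 (verts H)" "inj_on f2 (verts K)"
    "f1 ` verts H \<inter> f2 ` verts K = {c}"
    "G = (f1 ` verts H \<union> f2 ` verts K, image f1 ` edges H \<union> image f2 ` edges K)"
    using step.hyps(2) by (rule coalescence2E)
  have wf: "wf_graph H" "wf_graph K" using coalescence_wf_graph[OF step.hyps(1)] step.prems(1) by simp_all
  have "preserves_pos f H" "preserves_pos f K" using step.IH step.prems by simp_all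
  then have p: "preserves_pos f (f1 ` verts H, image f1 ` edges H)"
    "preserves_pos f (f2 ` verts K, image f2 ` edges K)"
    using preserves_pos_image[OF wf(1) f(1)] preserves_pos_image[OF wf(2) f(2)] assms(3) by simp_all
  have sub: "\<forall>e\<in>image f1 ` edges H. e \<subseteq> f1 ` verts H" "\<forall>e\<in>image f2 ` edges K. e \<subseteq> f2 ` verts K"
    using wf_graph_edge_subset[OF wf(1)] wf_graph_edge_subset[OF wf(2)] by blast+
  have fin: "finite (f1 ` verts H)" "finite (f2 ` verts K)" using wf by (simp_all add: wf_graph_finite)
  show ?case unfolding f(4) by (rule preserves_pos_glue[OF fin f(3) sub p assms(3,4)])
qed

section \<open>Necessary conditions from an induced path\<close>

definition no_isolated_vertex :: "'a sgraph \<Rightarrow> bool" where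
  "no_isolated_vertex G \<longleftrightarrow> (\<forall>v\<in>verts G. \<exists>u. {v, u} \<in> edges G)"

lemma no_isolated_vertex_image:
  assumes "no_isolated_vertex H"
  shows "no_isolated_vertex (g ` verts H, image g ` edges H)"
  unfolding no_isolated_vertex_def verts_pair edges_pair
proof
  fix v assume "v \<in> g ` verts H"
  then obtain w where w: "w \<in> verts H" "v = g w" by blast
  then obtain u where "{w, u} \<in> edges H" using assms unfolding no_isolated_vertex_def by blast
  then have "g ` {w, u} \<in> image g ` edges H" by blast
  then show "\<exists>u. {v, u} \<in> image g ` edges H" using w(2) by auto
qed

lemma no_isolated_vertex_Un:
  assumes "no_isolated_vertex (V1, E1)" "no_isolated_vertex (V2, E2)"
  shows "no_isolated_vertex (V1 \<union> V2, E1 \<union> E2)"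
  using assms unfolding no_isolated_vertex_def verts_pair edges_pair by blast

lemma coalescence_no_isolated_vertex:
  assumes "coalescence Hs G" "\<forall>H\<in>set Hs. no_isolated_vertex H"
  shows "no_isolated_vertex G"
  using assms
proof (induction rule: coalescence.induct)
  case (base G H)
  obtain g where "G = (g ` verts H, image g ` edges H)" using base.hyps by (rule graph_isoE)
  then show ?case using base.prems by (simp add: no_isolated_vertex_image)
next
  case (step Hs H G K)
  obtain f1 f2 and c :: 'a where
    "G = (f1 ` verts H \<union> f2 ` verts K, image f1 ` edges H \<union> image f2 ` edges K)"
    using step.hyps(2) by (rule coalescence2E)
  then show ?case using step by (simp add: no_isolated_vertex_Un no_isolated_vertex_image)
qed

lemma connected_no_isolated_vertex:
  assumes "wf_graph H" "connected_graph H" "edges H \<noteq> {}"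
  shows "no_isolated_vertex H"
  unfolding no_isolated_vertex_def
proof
  fix v assume v: "v \<in> verts H"
  obtain p q where pq: "p \<noteq> q" "p \<in> verts H" "q \<in> verts H"
    using assms(1,3) unfolding wf_graph_def by blast
  define z where "z = (if v = p then q else p)"
  have "z \<in> verts H" "z \<noteq> v" unfolding z_def using pq by auto
  then have "(adj H)\<^sup>*\<^sup>* v z" using assms(2) v unfolding connected_graph_def by blast
  then show "\<exists>u. {v, u} \<in> edges H"
    by (cases rule: converse_rtranclpE) (use \<open>z \<noteq> v\<close> in \<open>auto simp: adj_def\<close>)
qed

definition induced_path3 :: "'a sgraph \<Rightarrow> 'a \<Rightarrow> 'a \<Rightarrow> 'a \<Rightarrow> bool" where
  "induced_path3 G a c b \<longleftrightarrow> a \<in> verts G \<and> b \<in> verts G \<and> c \<in> verts G \<and>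
     a \<noteq> b \<and> a \<noteq> c \<and> b \<noteq> c \<and> adj G a c \<and> adj G c b \<and> \<not> adj G a b"

lemma coalescence2_induced_path3:
  assumes "coalescence2 G H K" "wf_graph H" "wf_graph K"
    and "no_isolated_vertex H" "no_isolated_vertex K"
  shows "\<exists>a c b. induced_path3 G a c b"
proof -
  obtain f1 f2 c where f: "inj_on f1 (verts H)" "inj_on f2 (verts K)"
    "f1 ` verts H \<inter> f2 ` verts K = {c}"
    "G = (f1 ` verts H \<union> f2 ` verts K, image f1 ` edges H \<union> image f2 ` edges K)"
    using assms(1) by (rule coalescence2E)
  text \<open>Neighbours of the cut vertex on either side form an induced path through it.\<close>
  obtain u w where uw: "u \<in> verts H" "c = f1 u" "w \<in> verts K" "c = f2 w" using f(3) by blast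
  obtain y z where yz: "{u, y} \<in> edges H" "{w, z} \<in> edges K"
    using assms(4,5) uw unfolding no_isolated_vertex_def by blast
  have y: "u \<noteq> y" "y \<in> verts H" and z: "w \<noteq> z" "z \<in> verts K"
    using wf_graph_edge_ends[OF assms(2) yz(1)] wf_graph_edge_ends[OF assms(3) yz(2)] by simp_all
  define a b where "a = f1 y" and "b = f2 z"
  have "f1 y \<noteq> f1 u" "f2 z \<noteq> f2 w" using f(1,2) y z uw(1,3) by (auto simp: inj_on_eq_iff)
  then have "a \<noteq> c" "b \<noteq> c" unfolding a_def b_def using uw(2,4) by simp_all
  moreover have "a \<in> f1 ` verts H" "b \<in> f2 ` verts K" unfolding a_def b_def using y z by simp_all
  ultimately have ab: "a \<notin> f2 ` verts K" "b \<notin> f1 ` verts H" using f(3) by blast+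
  have "f1 ` {u, y} \<in> edges G" "f2 ` {w, z} \<in> edges G"
    using yz unfolding f(4) edges_pair by blast+
  then have "{a, c} \<in> edges G" "{c, b} \<in> edges G"
    using uw(2,4) unfolding a_def b_def by (simp_all add: insert_commute)
  then have "adj G a c" "adj G c b" unfolding adj_def .
  moreover have "\<not> adj G a b"
  proof (rule no_adj_across)
    show "edges G = image f1 ` edges H \<union> image f2 ` edges K" by (simp add: f(4))
    show "\<forall>e\<in>image f1 ` edges H. e \<subseteq> f1 ` verts H" "\<forall>e\<in>image f2 ` edges K. e \<subseteq> f2 ` verts K"
      using wf_graph_edge_subset[OF assms(2)] wf_graph_edge_subset[OF assms(3)] by blast+
  qed (use ab in blast)+
  moreover have "a \<in> verts G" "b \<in> verts G" "c \<in> verts G"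
    using \<open>a \<in> f1 ` verts H\<close> \<open>b \<in> f2 ` verts K\<close> f(3) unfolding f(4) verts_pair by blast+
  moreover have "a \<noteq> b" using ab \<open>a \<in> f1 ` verts H\<close> by blast
  ultimately show ?thesis unfolding induced_path3_def using \<open>a \<noteq> c\<close> \<open>b \<noteq> c\<close> by blast
qed

lemma coalescence_induced_path3:
  assumes "coalescence Gs G" "length Gs > 1"
    and "\<forall>H\<in>set Gs. wf_graph H \<and> connected_graph H \<and> edges H \<noteq> {}"
  shows "\<exists>a c b. induced_path3 G a c b"
  using assms(1)
proof (cases rule: coalescence.cases)
  case (base H)
  then show ?thesis using assms(2) by simp
next
  case (step Hs H K)
  have "\<forall>H\<in>set Hs. no_isolated_vertex H" "no_isolated_vertex K"
    using assms(3) step(1) by (auto intro: connected_no_isolated_vertex)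
  then have "no_isolated_vertex H" using coalescence_no_isolated_vertex[OF step(2)] by blast
  moreover have "wf_graph H" using coalescence_wf_graph[OF step(2)] assms(3) step(1) by simp
  ultimately show ?thesis
    using coalescence2_induced_path3[OF step(3)] \<open>no_isolated_vertex K\<close> assms(3) step(1) by simp
qed

lemma in_PG_edge_rank_one:
  assumes "adj G a c" "0 \<le> t" "\<forall>i. i \<noteq> a \<and> i \<noteq> c \<longrightarrow> u i = 0"
  shows "in_PG G (\<lambda>i j. t * u i * u j)"
  unfolding in_PG_def psd_on_iff_quad quad_rank1
proof (intro conjI ballI allI impI)
  fix i j assume ij: "i \<noteq> j \<and> \<not> adj G i j"
  have "\<not> ((i = a \<and> j = c) \<or> (i = c \<and> j = a))" using ij assms(1) adj_sym[of G a c] by blast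
  then show "t * u i * u j = 0" using ij assms(3)[rule_format, of i] assms(3)[rule_format, of j] by auto
qed (use assms(2) in auto)

lemma in_PG_add:
  assumes "in_PG G M" "in_PG G N"
  shows "in_PG G (\<lambda>i j. M i j + N i j)"
  unfolding in_PG_def psd_on_iff_quad quad_add
proof (intro conjI ballI allI impI)
  show "0 \<le> quad (verts G) M x + quad (verts G) N x" for x
    using assms unfolding in_PG_def psd_on_iff_quad by (simp add: add_nonneg_nonneg)
qed (use assms in \<open>simp_all add: in_PG_def psd_on_iff_quad\<close>)

lemma induced_path3_superadditive:
  assumes fin: "finite (verts G)" and P: "induced_path3 G a c b"
    and pG: "preserves_pos f G" and f0: "f 0 = 0"
  shows "superadditive_nonneg f"
  unfolding superadditive_nonneg_def
proof (intro allI impI)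
  fix x y :: real assume xy: "0 \<le> x" "0 \<le> y"
  have d: "a \<noteq> b" "a \<noteq> c" "b \<noteq> c" using P unfolding induced_path3_def by simp_all
  text \<open>Test \<open>f[M]\<close>, for \<open>M = x (e_a + e_c)(e_a + e_c)^T + y (e_c + e_b)(e_c + e_b)^T\<close>,
    against the vector \<open>e_a - e_c + e_b\<close>.\<close>
  define ua ub where "ua = (\<lambda>i. if i = a \<or> i = c then 1 else (0::real))"
    and "ub = (\<lambda>i. if i = c \<or> i = b then 1 else (0::real))"
  define M where "M = (\<lambda>i j. x * ua i * ua j + y * ub i * ub j)"
  have "in_PG G M" unfolding M_def using P xy
    by (intro in_PG_add in_PG_edge_rank_one[of G a c] in_PG_edge_rank_one[of G c b])
      (auto simp: induced_path3_def ua_def ub_def)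
  then have "psd_on (verts G) (\<lambda>i j. f (M i j))" using pG unfolding preserves_pos_def in_PG_def by blast
  define z where "z = (\<lambda>i. if i = a then 1 else if i = c then -1 else if i = b then 1 else (0::real))"
  have "0 \<le> quad (verts G) (\<lambda>i j. f (M i j)) z"
    using \<open>psd_on (verts G) _\<close> unfolding psd_on_iff_quad by blast
  also have "\<dots> = quad {a, b, c} (\<lambda>i j. f (M i j)) z"
    using fin P by (intro quad_mono_neutral) (auto simp: z_def induced_path3_def)
  also have "\<dots> = f (x + y) - f x - f y"
    using d f0 unfolding quad_def z_def M_def ua_def ub_def by (simp add: algebra_simps)
  finally show "f x + f y \<le> f (x + y)" by simp
qed

lemma binary_quadratic_nonneg:
  fixes p q r :: real
  assumes h: "\<forall>u v. 0 \<le> u ^ 2 * p + 2 * u * v * r + v ^ 2 * q"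
  shows "0 \<le> p" "r ^ 2 \<le> p * q"
proof -
  show p0: "0 \<le> p" using h[rule_format, of 1 0] by simp
  show "r ^ 2 \<le> p * q"
  proof (cases "p = 0")
    case False
    have "0 \<le> r ^ 2 * p + 2 * r * (- p) * r + (- p) ^ 2 * q" using h by blast
    then have "0 \<le> p * (p * q - r ^ 2)" by (simp add: algebra_simps power2_eq_square)
    then show ?thesis using p0 False by (simp add: zero_le_mult_iff)
  next
    case True
    have "r = 0"
    proof (rule ccontr)
      assume "r \<noteq> 0"
      have "0 \<le> (- (q + 1) / (2 * r)) ^ 2 * p + 2 * (- (q + 1) / (2 * r)) * 1 * r + 1 ^ 2 * q"
        using h by blast
      also have "\<dots> = -1" using True \<open>r \<noteq> 0\<close> by (simp add: field_simps)
      finally show False by simp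
    qed
    then show ?thesis using True by simp
  qed
qed

lemma preserves_pos_edge_mult_midconvex:
  assumes fin: "finite (verts G)" and V: "a \<in> verts G" "c \<in> verts G" and ac: "a \<noteq> c" "adj G a c"
    and pG: "preserves_pos f G"
  shows "\<forall>x\<ge>0. 0 \<le> f x" "mult_midconvex f"
proof -
  text \<open>\<open>f\<close> applied to the rank-one matrix of \<open>(\<surd>A, \<surd>B)\<close> on the edge is a PSD \<open>2 \<times> 2\<close> matrix.\<close>
  have quadr: "0 \<le> u ^ 2 * f A + 2 * u * v * f (sqrt (A * B)) + v ^ 2 * f B"
    if AB: "0 \<le> A" "0 \<le> B" for A B u v
  proof -
    define w where "w = (\<lambda>i. if i = a then sqrt A else if i = c then sqrt B else (0::real))"
    have "in_PG G (\<lambda>i j. 1 * w i * w j)" using ac by (intro in_PG_edge_rank_one) (auto simp: w_def)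
    then have "psd_on (verts G) (\<lambda>i j. f (1 * w i * w j))"
      using pG unfolding preserves_pos_def in_PG_def by blast
    define z where "z = (\<lambda>i. if i = a then u else if i = c then v else (0::real))"
    have "0 \<le> quad (verts G) (\<lambda>i j. f (1 * w i * w j)) z"
      using \<open>psd_on (verts G) _\<close> unfolding psd_on_iff_quad by blast
    also have "\<dots> = quad {a, c} (\<lambda>i j. f (1 * w i * w j)) z"
      using fin V by (intro quad_mono_neutral) (auto simp: z_def)
    also have "\<dots> = u ^ 2 * f A + 2 * u * v * f (sqrt (A * B)) + v ^ 2 * f B"
      unfolding quad_def z_def w_def using ac AB
      by (simp add: algebra_simps power2_eq_square real_sqrt_mult)
    finally show ?thesis .
  qed
  show "\<forall>x\<ge>0. 0 \<le> f x"
  proof (intro allI impI)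
    fix x :: real assume "0 \<le> x"
    then have "\<forall>u v. 0 \<le> u ^ 2 * f x + 2 * u * v * f (sqrt (x * 0)) + v ^ 2 * f 0"
      using quadr[OF _ order.refl] by blast
    then show "0 \<le> f x" by (rule binary_quadratic_nonneg(1))
  qed
  show "mult_midconvex f" unfolding mult_midconvex_def
  proof (intro allI impI)
    fix A B :: real assume "0 \<le> A" "0 \<le> B"
    then have "\<forall>u v. 0 \<le> u ^ 2 * f A + 2 * u * v * f (sqrt (A * B)) + v ^ 2 * f B"
      using quadr by blast
    then show "f (sqrt (A * B)) ^ 2 \<le> f A * f B" by (rule binary_quadratic_nonneg(2))
  qed
qed

lemma coalescence_preserves_pos_iff:
  assumes len: "length Gs > 1"
    and hyp: "\<forall>H\<in>set Gs. wf_graph H \<and> connected_graph H \<and> edges H \<noteq> {}"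
    and co: "coalescence Gs G" and f0: "f 0 = 0"
  shows "preserves_pos f G \<longleftrightarrow>
    (\<forall>H\<in>set Gs. preserves_pos f H) \<and> continuous_on {0..} f \<and> superadditive_nonneg f"
proof -
  have wf: "\<forall>H\<in>set Gs. wf_graph H" using hyp by blast
  have fin: "finite (verts G)" using coalescence_wf_graph[OF co wf] by (rule wf_graph_finite)
  obtain a c b where P: "induced_path3 G a c b" using coalescence_induced_path3[OF co len hyp] by blast
  show ?thesis
  proof
    assume pG: "preserves_pos f G"
    have sa: "superadditive_nonneg f" by (rule induced_path3_superadditive[OF fin P pG f0])
    have "\<forall>x\<ge>0. 0 \<le> f x" "mult_midconvex f"
      using preserves_pos_edge_mult_midconvex[OF fin _ _ _ _ pG] P unfolding induced_path3_def by blast+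
    then have "continuous_on {0..} f" using superadditive_mult_midconvex_continuous f0 sa by blast
    then show "(\<forall>H\<in>set Gs. preserves_pos f H) \<and> continuous_on {0..} f \<and> superadditive_nonneg f"
      using coalescence_preserves_pos_factors[where f=f, OF co wf f0 pG] sa by blast
  qed (use coalescence_preserves_pos[where f=f, OF co wf f0] in blast)
qed

lemma powr_superadditive:
  fixes x y \<alpha> :: real
  assumes "1 \<le> \<alpha>" "0 \<le> x" "0 \<le> y"
  shows "x powr \<alpha> + y powr \<alpha> \<le> (x + y) powr \<alpha>"
proof (cases "x + y = 0")
  case True
  then have "x = 0" "y = 0" using assms(2,3) by simp_all
  then show ?thesis by simp
next
  case False
  define s where "s = x + y"
  have "s > 0" unfolding s_def using False assms by simp
  text \<open>Normalising by \<open>s\<close>, it suffices that \<open>t powr \<alpha> \<le> t\<close> for \<open>t \<in> [0, 1]\<close>.\<close>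
  have le: "(t / s) powr \<alpha> \<le> t / s" if "0 \<le> t" "t \<le> s" for t
  proof -
    have "(t / s) powr \<alpha> \<le> (t / s) powr 1"
      using that assms(1) \<open>s > 0\<close> by (intro powr_mono') simp_all
    then show ?thesis using that \<open>s > 0\<close> by simp
  qed
  have "x powr \<alpha> + y powr \<alpha> = ((x / s) powr \<alpha> + (y / s) powr \<alpha>) * s powr \<alpha>"
    using \<open>s > 0\<close> assms by (simp add: powr_divide distrib_right)
  also have "\<dots> \<le> (x / s + y / s) * s powr \<alpha>"
    using le[of x] le[of y] assms unfolding s_def by (intro mult_right_mono add_mono) auto
  also have "\<dots> = s powr \<alpha>" using \<open>s > 0\<close> unfolding s_def by (simp add: add_divide_distrib[symmetric])
  finally show ?thesis unfolding s_def .
qed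

lemma powr_continuous_superadditive_iff:
  fixes g :: "real \<Rightarrow> real"
  assumes g: "\<forall>x\<ge>0. g x = x powr \<alpha>"
  shows "continuous_on {0..} g \<and> superadditive_nonneg g \<longleftrightarrow> 1 \<le> \<alpha>"
proof
  assume "continuous_on {0..} g \<and> superadditive_nonneg g"
  then have "g 1 + g 1 \<le> g (1 + 1)" unfolding superadditive_nonneg_def by (meson zero_le_one)
  moreover have "g 1 = 1" "g (1 + 1) = 2 powr \<alpha>" using g by simp_all
  ultimately have "2 powr 1 \<le> (2::real) powr \<alpha>" by simp
  then show "1 \<le> \<alpha>" using powr_le_cancel_iff[of 2 1 \<alpha>] by simp
next
  assume "1 \<le> \<alpha>"
  have sa: "superadditive_nonneg g"
    unfolding superadditive_nonneg_def using powr_superadditive[OF \<open>1 \<le> \<alpha>\<close>] g by simp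
  have "mult_midconvex g"
    unfolding mult_midconvex_def
  proof (intro allI impI)
    fix a b :: real assume ab: "0 \<le> a" "0 \<le> b"
    have "(sqrt (a * b) powr \<alpha>) ^ 2 = (sqrt (a * b) * sqrt (a * b)) powr \<alpha>"
      unfolding power2_eq_square powr_mult ..
    also have "sqrt (a * b) * sqrt (a * b) = a * b" using ab by simp
    also have "(a * b) powr \<alpha> = a powr \<alpha> * b powr \<alpha>" by (rule powr_mult)
    finally show "g (sqrt (a * b)) ^ 2 \<le> g a * g b" using g ab by simp
  qed
  then have "continuous_on {0..} g" using superadditive_mult_midconvex_continuous[OF _ _ sa] g by simp
  then show "continuous_on {0..} g \<and> superadditive_nonneg g" using sa by simp
qed

lemma coalescence_powr_preserves_pos:
  fixes g :: "real \<Rightarrow> real \<Rightarrow> real"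
  assumes "length Gs > 1" "\<forall>H\<in>set Gs. wf_graph H \<and> connected_graph H \<and> edges H \<noteq> {}"
    and "coalescence Gs G" and g: "\<forall>\<alpha>. \<forall>x\<ge>0. g \<alpha> x = x powr \<alpha>"
  shows "{\<alpha>. preserves_pos (g \<alpha>) G} = {1..} \<inter> (\<Inter>H\<in>set Gs. {\<alpha>. preserves_pos (g \<alpha>) H})"
proof (intro set_eqI)
  fix \<alpha> :: real
  have "g \<alpha> 0 = 0" using g by simp
  then have "preserves_pos (g \<alpha>) G \<longleftrightarrow> (\<forall>H\<in>set Gs. preserves_pos (g \<alpha>) H) \<and>
      continuous_on {0..} (g \<alpha>) \<and> superadditive_nonneg (g \<alpha>)"
    by (rule coalescence_preserves_pos_iff[where f="g \<alpha>", OF assms(1-3)])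
  moreover have "continuous_on {0..} (g \<alpha>) \<and> superadditive_nonneg (g \<alpha>) \<longleftrightarrow> 1 \<le> \<alpha>"
    using g by (intro powr_continuous_superadditive_iff) simp
  ultimately show "\<alpha> \<in> {\<alpha>. preserves_pos (g \<alpha>) G} \<longleftrightarrow>
      \<alpha> \<in> {1..} \<inter> (\<Inter>H\<in>set Gs. {\<alpha>. preserves_pos (g \<alpha>) H})" by auto
qed

lemma psi_nonneg: "0 \<le> x \<Longrightarrow> psi \<alpha> x = x powr \<alpha>"
  unfolding psi_def by auto

lemma phi_nonneg: "0 \<le> x \<Longrightarrow> phi \<alpha> x = x powr \<alpha>"
  unfolding phi_def by auto

theorem proposition4p11:
  fixes Gs :: "'a sgraph list" and G :: "'a sgraph" and f :: "real \<Rightarrow> real"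
  assumes "length Gs > 1"
    and "\<forall>H\<in>set Gs. wf_graph H \<and> connected_graph H \<and> edges H \<noteq> {}"
    and "coalescence Gs G"
    and "f 0 = 0"
  shows "(preserves_pos f G \<longleftrightarrow>
            (\<forall>H\<in>set Gs. preserves_pos f H) \<and> continuous_on {0..} f \<and> superadditive_nonneg f)
       \<and> H_psi G = {1..} \<inter> (\<Inter>H\<in>set Gs. H_psi H)
       \<and> H_phi G = {1..} \<inter> (\<Inter>H\<in>set Gs. H_phi H)"
proof -
  have "H_psi G = {1..} \<inter> (\<Inter>H\<in>set Gs. H_psi H)"
    unfolding H_psi_def by (rule coalescence_powr_preserves_pos[OF assms(1-3)]) (simp add: psi_nonneg)
  moreover have "H_phi G = {1..} \<inter> (\<Inter>H\<in>set Gs. H_phi H)"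
    unfolding H_phi_def by (rule coalescence_powr_preserves_pos[OF assms(1-3)]) (simp add: phi_nonneg)
  ultimately show ?thesis using coalescence_preserves_pos_iff[where f=f, OF assms] by blast
qed

end
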